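(* Let $E$ be a finite set and let $\mathcal{Q}\subseteq 2^E$ be a weakly Rayleigh set-system. If $\varnothing\in\mathcal{Q}$ and $E\in\mathcal{Q}$, then $\mathcal{Q}=2^E$.
   Context: For $\omega:2^E\to[0,\infty)$ not identically zero, $Z(\omega;\mathbf{y})=\sum_{S\subseteq E}\omega(S)\prod_{e\in S}y_e$. With $Z_e=\partial Z/\partial y_e$, $Z_{ef}=\partial^2Z/\partial y_e\partial y_f$, $\Delta Z\{e,f\}=Z_eZ_f-Z_{ef}Z$, $Z$ is Rayleigh if $\Delta Z\{e,f\}(\mathbf{y})\ge0$ for all distinct $e,f$ and all $\mathbf{y}$ with all $y_c>0$. $\mathcal{Q}$ is weakly Rayleigh if there is $\omega\ge0$ with $\{S:\omega(S)>0\}=\mathcal{Q}$ and $Z(\omega;\mathbf{y})$ Rayleigh. *)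

theory Defs
  imports "HOL-Analysis.Analysis"
begin

definition genZ :: "'a set \<Rightarrow> ('a set \<Rightarrow> real) \<Rightarrow> ('a \<Rightarrow> real) \<Rightarrow> real" where
  "genZ E \<omega> y = (\<Sum>S\<in>Pow E. \<omega> S * (\<Prod>e\<in>S. y e))"

definition pderivZ :: "'a \<Rightarrow> (('a \<Rightarrow> real) \<Rightarrow> real) \<Rightarrow> ('a \<Rightarrow> real) \<Rightarrow> real" where
  "pderivZ e F y = deriv (\<lambda>t. F (y(e := t))) (y e)"

definition rayleigh_diff :: "'a set \<Rightarrow> ('a set \<Rightarrow> real) \<Rightarrow> 'a \<Rightarrow> 'a \<Rightarrow> ('a \<Rightarrow> real) \<Rightarrow> real" where
  "rayleigh_diff E \<omega> e f y =
     pderivZ e (genZ E \<omega>) y * pderivZ f (genZ E \<omega>) y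
     - pderivZ e (pderivZ f (genZ E \<omega>)) y * genZ E \<omega> y"

definition rayleigh :: "'a set \<Rightarrow> ('a set \<Rightarrow> real) \<Rightarrow> bool" where
  "rayleigh E \<omega> \<longleftrightarrow>
     (\<forall>e\<in>E. \<forall>f\<in>E. e \<noteq> f \<longrightarrow>
        (\<forall>y. (\<forall>c\<in>E. y c > 0) \<longrightarrow> rayleigh_diff E \<omega> e f y \<ge> 0))"

definition weakly_rayleigh :: "'a set \<Rightarrow> 'a set set \<Rightarrow> bool" where
  "weakly_rayleigh E Q \<longleftrightarrow>
     (\<exists>\<omega> :: 'a set \<Rightarrow> real.
        (\<forall>S\<in>Pow E. \<omega> S \<ge> 0) \<and> (\<exists>S\<in>Pow E. \<omega> S \<noteq> 0) \<and>
        {S\<in>Pow E. \<omega> S > 0} = Q \<and> rayleigh E \<omega>)"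

end

theory Submission
  imports Defs
begin

text \<open>Write Z = A + y_e B + y_f C + y_e y_f D with A, B, C, D free of y_e, y_f, so that
  \<Delta>Z{e,f} = BC - AD. Suppose T \<subseteq> U both carry positive weight and e, f \<in> U - T, but no set of
  positive weight between T and U contains e and avoids f. At y = M on T, 1 on U - T and 1/M off
  U, both A and D are at least a positive constant times M^|T| and C is O(M^|T|), while B is
  O(M^(|T|-1)): each of its monomials comes from a set containing e and avoiding f, which
  therefore does not lie between T and U. For large M this contradicts BC \<ge> AD. Hence such a set
  exists, and an induction on |U - T| shows that the support of a Rayleigh weight contains every
  set lying between two of its members; with \<emptyset> and E in the support, it is all of 2^E.\<close>

lemma genZ_cong: "(\<And>c. c \<in> E \<Longrightarrow> y c = y' c) \<Longrightarrow> genZ E \<omega> y = genZ E \<omega> y'"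
  unfolding genZ_def by (intro sum.cong refl arg_cong2[where f="(*)"] prod.cong) auto

lemma genZ_remove:
  assumes "finite E" "e \<in> E"
  shows "genZ E \<omega> y = genZ (E - {e}) \<omega> y + y e * genZ (E - {e}) (\<lambda>S. \<omega> (insert e S)) y"
proof -
  let ?E' = "E - {e}"
  have fin: "finite ?E'" using assms by auto
  have Pow_E: "Pow E = Pow ?E' \<union> insert e ` Pow ?E'"
    using Pow_insert[of e ?E'] assms(2) by (simp add: insert_absorb)
  have inj: "inj_on (insert e) (Pow ?E')" unfolding inj_on_def by blast
  have "genZ E \<omega> y = (\<Sum>S\<in>Pow ?E'. \<omega> S * prod y S) + (\<Sum>S\<in>insert e ` Pow ?E'. \<omega> S * prod y S)"
    unfolding genZ_def Pow_E by (rule sum.union_disjoint) (use fin in auto)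
  also have "(\<Sum>S\<in>insert e ` Pow ?E'. \<omega> S * prod y S)
      = (\<Sum>S\<in>Pow ?E'. y e * (\<omega> (insert e S) * prod y S))"
    unfolding sum.reindex[OF inj] o_def
  proof (rule sum.cong[OF refl])
    fix S assume "S \<in> Pow ?E'"
    then have "finite S" "e \<notin> S" using fin finite_subset by auto
    then show "\<omega> (insert e S) * prod y (insert e S) = y e * (\<omega> (insert e S) * prod y S)" by simp
  qed
  finally show ?thesis unfolding genZ_def by (simp add: sum_distrib_left)
qed

lemma pderivZ_genZ:
  assumes "finite E" "e \<in> E"
  shows "pderivZ e (genZ E \<omega>) = genZ (E - {e}) (\<lambda>S. \<omega> (insert e S))"
proof
  fix y
  let ?a = "genZ (E - {e}) \<omega> y" and ?b = "genZ (E - {e}) (\<lambda>S. \<omega> (insert e S)) y"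
  have "genZ E \<omega> (y(e := t)) = ?a + t * ?b" for t
    using genZ_remove[OF assms, of \<omega> "y(e := t)"]
      genZ_cong[of "E - {e}" "y(e := t)" y] by simp
  then have "(\<lambda>t. genZ E \<omega> (y(e := t))) = (\<lambda>t. ?a + t * ?b)" by auto
  moreover have "deriv (\<lambda>t. ?a + t * ?b) (y e) = ?b"
    by (rule DERIV_imp_deriv) (auto intro!: derivative_eq_intros)
  ultimately show "pderivZ e (genZ E \<omega>) y = ?b" unfolding pderivZ_def by simp
qed

lemma rayleigh_diff_eq:
  assumes "finite E" "e \<in> E" "f \<in> E" "e \<noteq> f"
  defines "F \<equiv> E - {e} - {f}"
  shows "rayleigh_diff E \<omega> e f y =
    genZ F (\<lambda>S. \<omega> (insert e S)) y * genZ F (\<lambda>S. \<omega> (insert f S)) y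
    - genZ F \<omega> y * genZ F (\<lambda>S. \<omega> (insert e (insert f S))) y"
proof -
  have F_swap: "E - {f} - {e} = F" unfolding F_def by auto
  have insert_swap: "(\<lambda>S. \<omega> (insert f (insert e S))) = (\<lambda>S. \<omega> (insert e (insert f S)))"
    by (simp add: insert_commute)
  have fin: "finite (E - {e})" "finite (E - {f})" using assms by auto
  have mem: "f \<in> E - {e}" "e \<in> E - {f}" using assms by auto
  note split_e = genZ_remove[OF fin(1) mem(1), folded F_def]
  note split_f = genZ_remove[OF fin(2) mem(2), unfolded F_swap]
  show ?thesis
    unfolding rayleigh_diff_def pderivZ_genZ[OF assms(1,2)] pderivZ_genZ[OF assms(1,3)]
      pderivZ_genZ[OF fin(2) mem(2)] genZ_remove[OF assms(1,2), of \<omega>] split_e split_f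
    by (simp add: F_swap insert_swap algebra_simps)
qed

lemma rayleigh_contraction_ineq:
  assumes "finite E" "rayleigh E \<omega>" "e \<in> E" "f \<in> E" "e \<noteq> f" "\<forall>c\<in>E. y c > 0"
  defines "F \<equiv> E - {e} - {f}"
  shows "genZ F \<omega> y * genZ F (\<lambda>S. \<omega> (insert e (insert f S))) y
    \<le> genZ F (\<lambda>S. \<omega> (insert e S)) y * genZ F (\<lambda>S. \<omega> (insert f S)) y"
  using assms rayleigh_diff_eq[OF assms(1,3-5), of \<omega> y] unfolding rayleigh_def by fastforce

lemma genZ_nonneg:
  assumes "\<forall>S\<in>Pow E. \<omega> S \<ge> 0" "\<forall>c\<in>E. y c \<ge> 0"
  shows "genZ E \<omega> y \<ge> 0"
  unfolding genZ_def using assms by (intro sum_nonneg mult_nonneg_nonneg prod_nonneg) auto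

lemma genZ_ge_term:
  assumes "finite E" "\<forall>S\<in>Pow E. \<omega> S \<ge> 0" "\<forall>c\<in>E. y c \<ge> 0" "S \<subseteq> E"
  shows "\<omega> S * prod y S \<le> genZ E \<omega> y"
  unfolding genZ_def
proof (rule member_le_sum)
  show "0 \<le> \<omega> X * prod y X" if "X \<in> Pow E - {S}" for X
    using that assms(2,3) by (intro mult_nonneg_nonneg prod_nonneg) auto
qed (use assms in auto)

lemma genZ_le_mass:
  assumes "\<forall>S\<in>Pow E. \<omega> S \<ge> 0" "\<And>S. S \<subseteq> E \<Longrightarrow> \<omega> S \<noteq> 0 \<Longrightarrow> prod y S \<le> b"
  shows "genZ E \<omega> y \<le> (\<Sum>S\<in>Pow E. \<omega> S) * b"
proof -
  have "genZ E \<omega> y \<le> (\<Sum>S\<in>Pow E. \<omega> S * b)"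
    unfolding genZ_def
  proof (rule sum_mono)
    fix S assume "S \<in> Pow E"
    then show "\<omega> S * prod y S \<le> \<omega> S * b"
      using assms by (cases "\<omega> S = 0") (auto intro: mult_left_mono)
  qed
  then show ?thesis by (simp add: sum_distrib_right)
qed

definition interval_weight :: "'a set \<Rightarrow> 'a set \<Rightarrow> real \<Rightarrow> 'a \<Rightarrow> real" where
  "interval_weight T U M c = (if c \<in> T then M else if c \<in> U then 1 else 1 / M)"

lemma interval_weight_pos: "M > 0 \<Longrightarrow> interval_weight T U M c > 0"
  unfolding interval_weight_def by auto

lemma prod_interval_weight_between:
  assumes "T \<subseteq> S" "S \<subseteq> U" "finite S"
  shows "prod (interval_weight T U M) S = M ^ card T"
proof -
  have "prod (interval_weight T U M) S
      = prod (interval_weight T U M) (S - T) * prod (interval_weight T U M) T"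
    by (rule prod.subset_diff[OF assms(1,3)])
  also have "prod (interval_weight T U M) (S - T) = 1"
    using assms(2) by (intro prod.neutral) (auto simp: interval_weight_def)
  finally show ?thesis by (simp add: interval_weight_def)
qed

lemma prod_interval_weight_le_inter:
  assumes "M \<ge> 1" "finite S"
  shows "prod (interval_weight T U M) S \<le> M ^ card (S \<inter> T)"
proof -
  have "prod (interval_weight T U M) S \<le> prod (\<lambda>c. if c \<in> T then M else 1) S"
    using assms(1) by (intro prod_mono) (auto simp: interval_weight_def)
  also have "\<dots> = prod (\<lambda>c. M) (S \<inter> T)"
    by (rule prod.inter_restrict[symmetric]) (rule assms(2))
  finally show ?thesis by simp
qed

lemma prod_interval_weight_le:
  assumes "M \<ge> 1" "finite T" "finite S"
  shows "prod (interval_weight T U M) S \<le> M ^ card T"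
proof -
  have "M ^ card (S \<inter> T) \<le> M ^ card T"
    using assms by (intro power_increasing card_mono) auto
  then show ?thesis using prod_interval_weight_le_inter[OF assms(1,3), of T U] by linarith
qed

lemma prod_interval_weight_outside:
  assumes "M \<ge> 1" "T \<subseteq> U" "finite T" "finite S" "\<not> (T \<subseteq> S \<and> S \<subseteq> U)"
  shows "prod (interval_weight T U M) S \<le> M ^ card T / M"
proof (cases "T \<subseteq> S")
  case False
  then have "card (S \<inter> T) < card T" using assms(3) by (intro psubset_card_mono) auto
  then have "M ^ card (S \<inter> T) * M \<le> M ^ card T"
    using assms(1) power_increasing[of "Suc (card (S \<inter> T))" "card T" M] by (simp add: mult.commute)
  moreover have "prod (interval_weight T U M) S * M \<le> M ^ card (S \<inter> T) * M"
    by (rule mult_right_mono[OF prod_interval_weight_le_inter[OF assms(1,4)]])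
      (use assms(1) in linarith)
  ultimately have "prod (interval_weight T U M) S * M \<le> M ^ card T" by linarith
  then show ?thesis using assms(1) by (simp add: le_divide_eq)
next
  case True
  then obtain c where c: "c \<in> S" "c \<notin> U" using assms(5) by auto
  have "interval_weight T U M c = 1 / M"
    using c assms(2) by (auto simp: interval_weight_def)
  then have "prod (interval_weight T U M) S = (1 / M) * prod (interval_weight T U M) (S - {c})"
    using prod.remove[OF assms(4) c(1), of "interval_weight T U M"] by simp
  also have "\<dots> \<le> (1 / M) * M ^ card T"
    using prod_interval_weight_le[OF assms(1,3)] assms(1,4) by (intro mult_left_mono) auto
  finally show ?thesis by simp
qed

lemma genZ_interval_weight_ge:
  assumes "finite F" "\<forall>S\<in>Pow F. \<omega> S \<ge> 0" "M > 0" "T \<subseteq> S" "S \<subseteq> U" "S \<subseteq> F"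
  shows "\<omega> S * M ^ card T \<le> genZ F \<omega> (interval_weight T U M)"
proof -
  have "\<forall>c\<in>F. interval_weight T U M c \<ge> 0"
    by (simp add: less_imp_le[OF interval_weight_pos[OF assms(3)]])
  then have "\<omega> S * prod (interval_weight T U M) S \<le> genZ F \<omega> (interval_weight T U M)"
    by (rule genZ_ge_term[OF assms(1,2) _ assms(6)])
  moreover have "prod (interval_weight T U M) S = M ^ card T"
    using assms(1,4-6) by (intro prod_interval_weight_between) (auto intro: finite_subset)
  ultimately show ?thesis by simp
qed

lemma genZ_interval_weight_le:
  assumes "finite F" "\<forall>S\<in>Pow F. \<omega> S \<ge> 0" "M \<ge> 1" "finite T"
  shows "genZ F \<omega> (interval_weight T U M) \<le> (\<Sum>S\<in>Pow F. \<omega> S) * M ^ card T"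
  using assms by (intro genZ_le_mass prod_interval_weight_le) (auto intro: finite_subset)

lemma genZ_interval_weight_le_outside:
  assumes "finite F" "\<forall>S\<in>Pow F. \<omega> S \<ge> 0" "M \<ge> 1" "T \<subseteq> U" "finite T"
    and outside: "\<And>S. S \<subseteq> F \<Longrightarrow> \<omega> S \<noteq> 0 \<Longrightarrow> \<not> (T \<subseteq> S \<and> S \<subseteq> U)"
  shows "genZ F \<omega> (interval_weight T U M) \<le> (\<Sum>S\<in>Pow F. \<omega> S) * (M ^ card T / M)"
  using assms by (intro genZ_le_mass prod_interval_weight_outside) (auto intro: finite_subset)

lemma rayleigh_exchange_bound:
  assumes fin: "finite E" and nonneg: "\<forall>S\<in>Pow E. \<omega> S \<ge> 0" and ray: "rayleigh E \<omega>"
    and TU: "T \<subseteq> U" "U \<subseteq> E" and ef: "e \<in> U - T" "f \<in> U - T" "e \<noteq> f"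
    and no_between: "\<And>S. T \<subseteq> S \<Longrightarrow> S \<subseteq> U \<Longrightarrow> e \<in> S \<Longrightarrow> f \<notin> S \<Longrightarrow> \<omega> S = 0"
    and M: "M \<ge> 1"
  defines "F \<equiv> E - {e} - {f}"
  shows "\<omega> T * \<omega> U * M
    \<le> (\<Sum>S\<in>Pow F. \<omega> (insert e S)) * (\<Sum>S\<in>Pow F. \<omega> (insert f S))"
proof -
  define y where "y = interval_weight T U M"
  define k where "k = M ^ card T"
  let ?A = "genZ F \<omega> y" and ?B = "genZ F (\<lambda>S. \<omega> (insert e S)) y"
    and ?C = "genZ F (\<lambda>S. \<omega> (insert f S)) y"
    and ?D = "genZ F (\<lambda>S. \<omega> (insert e (insert f S))) y"
  let ?K1 = "\<Sum>S\<in>Pow F. \<omega> (insert e S)" and ?K2 = "\<Sum>S\<in>Pow F. \<omega> (insert f S)"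
  have finF: "finite F" and finT: "finite T"
    using fin TU unfolding F_def by (auto intro: finite_subset)
  have eE: "e \<in> E" "f \<in> E" using ef TU by auto
  have M_pos: "M > 0" and k_pos: "k > 0" using M unfolding k_def by auto
  have nonneg_F: "\<forall>S\<in>Pow F. \<omega> S \<ge> 0" "\<forall>S\<in>Pow F. \<omega> (insert e S) \<ge> 0"
    "\<forall>S\<in>Pow F. \<omega> (insert f S) \<ge> 0" "\<forall>S\<in>Pow F. \<omega> (insert e (insert f S)) \<ge> 0"
    using nonneg eE unfolding F_def by auto
  have "T \<subseteq> F" using TU ef unfolding F_def by auto
  then have A: "\<omega> T * k \<le> ?A"
    unfolding y_def k_def
    by (rule genZ_interval_weight_ge[OF finF nonneg_F(1) M_pos subset_refl TU(1)])
  have D: "\<omega> U * k \<le> ?D"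
  proof -
    have "insert e (insert f (U - {e} - {f})) = U" using ef by auto
    then show ?thesis
      using genZ_interval_weight_ge[OF finF nonneg_F(4) M_pos, of T "U - {e} - {f}" U] TU ef
      unfolding y_def k_def F_def by auto
  qed
  have B: "?B \<le> ?K1 * (k / M)"
    unfolding y_def k_def
  proof (rule genZ_interval_weight_le_outside[OF finF nonneg_F(2) M TU(1) finT])
    fix S assume "S \<subseteq> F" "\<omega> (insert e S) \<noteq> 0"
    then show "\<not> (T \<subseteq> S \<and> S \<subseteq> U)"
      using no_between[of "insert e S"] ef unfolding F_def by auto
  qed
  have C: "?C \<le> ?K2 * k"
    unfolding y_def k_def by (rule genZ_interval_weight_le[OF finF nonneg_F(3) M finT])
  have y_pos: "\<forall>c\<in>E. y c > 0" unfolding y_def by (simp add: interval_weight_pos[OF M_pos])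
  have y_nonneg: "\<forall>c\<in>F. y c \<ge> 0"
    unfolding y_def by (simp add: less_imp_le[OF interval_weight_pos[OF M_pos]])
  have "0 \<le> \<omega> T" "0 \<le> \<omega> U" using nonneg TU by auto
  then have "0 \<le> \<omega> T * k" "0 \<le> \<omega> U * k" using k_pos by simp_all
  then have "\<omega> T * k * (\<omega> U * k) \<le> ?A * ?D"
    using A by (intro mult_mono[OF A D]) simp_all
  also have "\<dots> \<le> ?B * ?C"
    using rayleigh_contraction_ineq[OF fin ray eE ef(3) y_pos] by (simp only: F_def)
  also have "\<dots> \<le> ?K1 * (k / M) * (?K2 * k)"
  proof (rule mult_mono[OF B C])
    have "0 \<le> ?K1" using nonneg_F(2) by (intro sum_nonneg) blast
    then show "0 \<le> ?K1 * (k / M)" using k_pos M_pos by simp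
    show "0 \<le> ?C" by (rule genZ_nonneg[OF nonneg_F(3) y_nonneg])
  qed
  finally have "(\<omega> T * \<omega> U * M) * (k * k) \<le> (?K1 * ?K2) * (k * k)"
    using M_pos by (simp add: field_simps)
  then show ?thesis using k_pos by simp
qed

lemma rayleigh_support_exchange:
  assumes fin: "finite E" and nonneg: "\<forall>S\<in>Pow E. \<omega> S \<ge> 0" and ray: "rayleigh E \<omega>"
    and TU: "T \<subseteq> U" "U \<subseteq> E" and ef: "e \<in> U - T" "f \<in> U - T" "e \<noteq> f"
    and pos: "\<omega> T > 0" "\<omega> U > 0"
  shows "\<exists>S. T \<subseteq> S \<and> S \<subseteq> U \<and> e \<in> S \<and> f \<notin> S \<and> \<omega> S > 0"
proof (rule ccontr)
  assume none: "\<not> ?thesis"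
  have no_between: "\<omega> S = 0" if "T \<subseteq> S" "S \<subseteq> U" "e \<in> S" "f \<notin> S" for S
    using none nonneg TU that by (metis PowI dual_order.trans less_eq_real_def)
  define K where "K = (\<Sum>S\<in>Pow (E - {e} - {f}). \<omega> (insert e S))
    * (\<Sum>S\<in>Pow (E - {e} - {f}). \<omega> (insert f S))"
  define M where "M = max 1 (K / (\<omega> T * \<omega> U) + 1)"
  have "\<omega> T * \<omega> U * M \<le> K"
    unfolding K_def
    by (rule rayleigh_exchange_bound[OF fin nonneg ray TU ef no_between]) (auto simp: M_def)
  then have "M \<le> K / (\<omega> T * \<omega> U)"
    using pos by (simp add: field_simps)
  then show False unfolding M_def by linarith
qed

lemma rayleigh_support_interval:
  assumes fin: "finite E" and nonneg: "\<forall>S\<in>Pow E. \<omega> S \<ge> 0" and ray: "rayleigh E \<omega>"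
    and "U \<subseteq> E" "\<omega> T > 0" "\<omega> U > 0" "T \<subseteq> X" "X \<subseteq> U"
  shows "\<omega> X > 0"
  using assms(4-)
proof (induction "card (U - T)" arbitrary: T U X rule: less_induct)
  case less
  show ?case
  proof (cases "X = T \<or> X = U")
    case True
    then show ?thesis using less.prems by auto
  next
    case False
    then obtain e f where e: "e \<in> X - T" and f: "f \<in> U - X" using less.prems by blast
    have fin_UT: "finite (U - T)" using fin less.prems(1) by (auto intro: finite_subset)
    obtain S where S: "T \<subseteq> S" "S \<subseteq> U" "e \<in> S" "f \<notin> S" "\<omega> S > 0"
      using rayleigh_support_exchange[OF fin nonneg ray, of T U e f] e f less.prems by blast
    have "card (S - T) < card (U - T)"
      using S f less.prems by (intro psubset_card_mono[OF fin_UT]) blast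
    then have lower: "\<omega> (insert e T) > 0"
      using less.hyps[of S T "insert e T"] S e less.prems by auto
    have "card (U - S) < card (U - T)"
      using S e less.prems by (intro psubset_card_mono[OF fin_UT]) blast
    then have upper: "\<omega> (U - {f}) > 0"
      using less.hyps[of U S "U - {f}"] S f less.prems by auto
    have "card ((U - {f}) - insert e T) < card (U - T)"
      using e less.prems by (intro psubset_card_mono[OF fin_UT]) blast
    then show ?thesis
      using less.hyps[of "U - {f}" "insert e T" X] lower upper e f less.prems by auto
  qed
qed

theorem theorem4p2:
  fixes E :: "'a set" and Q :: "'a set set"
  assumes "finite E"
    and "Q \<subseteq> Pow E"
    and "weakly_rayleigh E Q"
    and "{} \<in> Q"
    and "E \<in> Q"
  shows "Q = Pow E"
proof -
  obtain \<omega> :: "'a set \<Rightarrow> real" where nonneg: "\<forall>S\<in>Pow E. \<omega> S \<ge> 0"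
    and Q: "{S\<in>Pow E. \<omega> S > 0} = Q" and ray: "rayleigh E \<omega>"
    using assms(3) unfolding weakly_rayleigh_def by blast
  have "\<omega> {} > 0" "\<omega> E > 0" using assms(4,5) Q by auto
  then have "\<omega> X > 0" if "X \<subseteq> E" for X
    using rayleigh_support_interval[OF assms(1) nonneg ray subset_refl] that by blast
  then show ?thesis using Q by auto
qed

end
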